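(* Let $n$, $q\ge2$ and $a\in[1:n]$ be integers, and $\nu=\lceil (n+1)/a\rceil$. For any $\mathbf{l}=(l_1,\dots,l_{q-1})\in[1:\nu]^{q-1}$, the cell $$C_{\mathbf{l}}=\{\mathbf{t}\in\mathcal{N}_{q,n}:(l_i-1)a\le t_i\le l_ia-1\ \ \forall i\in[1:q-1]\}$$ is non-empty if and only if $q-1\le\sum_{i=1}^{q-1}l_i\le\frac na+(q-1)$.
   Context: $\mathcal{N}_{q,n}=\{\mathbf{t}\in\mathbb{Z}_{\ge0}^q:\sum_{i=1}^qt_i=n\}$. *)

theory Defs
  imports Complex_Main
begin

text \<open>Compositions N_{q,n}: vectors t = (t_1,...,t_q) of nonnegative integers with sum n,
  represented as functions nat => nat that vanish outside the index set {1..q}.\<close>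
definition compositions :: "nat \<Rightarrow> nat \<Rightarrow> (nat \<Rightarrow> nat) set" where
  "compositions q n = {t. (\<forall>i. i \<notin> {1..q} \<longrightarrow> t i = 0) \<and> (\<Sum>i=1..q. t i) = n}"

definition cell :: "nat \<Rightarrow> nat \<Rightarrow> nat \<Rightarrow> (nat \<Rightarrow> nat) \<Rightarrow> (nat \<Rightarrow> nat) set" where
  "cell q n a l = {t \<in> compositions q n.
     \<forall>i\<in>{1..q-1}. (l i - 1) * a \<le> t i \<and> t i \<le> l i * a - 1}"

end

theory Submission
  imports Defs
begin

text \<open>Every cell is a box whose lower corner has coordinates \<open>(l\<^sub>i - 1) a\<close>, and the last
  coordinate \<open>t\<^sub>q\<close> is unconstrained. Hence \<open>C\<^sub>l\<close> contains a composition iff its lower corner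
  has coordinate sum at most \<open>n\<close>, i.e. iff \<open>a (\<Sum>l\<^sub>i - (q - 1)) \<le> n\<close>; the remaining mass
  \<open>n - a (\<Sum>l\<^sub>i - (q - 1))\<close> is put into \<open>t\<^sub>q\<close>. The lower bound \<open>q - 1 \<le> \<Sum>l\<^sub>i\<close> holds
  automatically since every \<open>l\<^sub>i \<ge> 1\<close>.\<close>

lemma sum_pred_mult:
  fixes l :: "nat \<Rightarrow> nat"
  assumes "\<forall>i\<in>A. 1 \<le> l i"
  shows "(\<Sum>i\<in>A. (l i - 1) * a) = a * (sum l A - card A)"
proof -
  have "(\<Sum>i\<in>A. (l i - 1) * a) = (\<Sum>i\<in>A. l i - 1) * a"
    by (simp add: sum_distrib_right)
  also have "(\<Sum>i\<in>A. l i - 1) = sum l A - card A"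
    using assms by (simp add: sum_subtractf_nat)
  finally show ?thesis by (simp add: mult.commute)
qed

lemma cell_lower_corner_sum_le:
  assumes "t \<in> cell q n a l"
  shows "(\<Sum>i=1..q-1. (l i - 1) * a) \<le> n"
proof -
  from assms have sum_t: "(\<Sum>i=1..q. t i) = n"
    and lower: "\<forall>i\<in>{1..q-1}. (l i - 1) * a \<le> t i"
    unfolding cell_def compositions_def by auto
  have "(\<Sum>i=1..q-1. (l i - 1) * a) \<le> (\<Sum>i=1..q-1. t i)"
    using lower by (intro sum_mono) blast
  also have "\<dots> \<le> (\<Sum>i=1..q. t i)"
    by (rule sum_mono2) auto
  finally show ?thesis using sum_t by simp
qed

lemma lower_corner_in_cell:
  assumes "1 \<le> a" and "1 \<le> q" and "\<forall>i\<in>{1..q-1}. 1 \<le> l i"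
    and corner_le: "(\<Sum>i=1..q-1. (l i - 1) * a) \<le> n"
  defines "t \<equiv> \<lambda>i. if i \<in> {1..q-1} then (l i - 1) * a
                    else if i = q then n - (\<Sum>j=1..q-1. (l j - 1) * a) else 0"
  shows "t \<in> cell q n a l"
proof -
  obtain m where q: "q = Suc m" using \<open>1 \<le> q\<close> by (cases q) auto
  have "(\<Sum>i=1..q. t i) = (\<Sum>i=1..m. t i) + t q"
    by (simp add: q)
  also have "(\<Sum>i=1..m. t i) = (\<Sum>i=1..m. (l i - 1) * a)"
    by (rule sum.cong) (auto simp: t_def q)
  finally have "(\<Sum>i=1..q. t i) = n"
    using corner_le by (simp add: t_def q)
  then have "t \<in> compositions q n"
    unfolding compositions_def by (auto simp: t_def q)
  moreover have "(l i - 1) * a \<le> t i \<and> t i \<le> l i * a - 1" if "i \<in> {1..q-1}" for i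
  proof -
    have "(l i - 1) * a \<le> l i * a - 1"
      using that assms(1,3) by (simp add: diff_mult_distrib)
    then show ?thesis using that by (simp add: t_def)
  qed
  ultimately show ?thesis unfolding cell_def by blast
qed

lemma cell_nonempty_iff:
  assumes "1 \<le> a" and "1 \<le> q" and "\<forall>i\<in>{1..q-1}. 1 \<le> l i"
  shows "cell q n a l \<noteq> {} \<longleftrightarrow> a * ((\<Sum>i=1..q-1. l i) - (q - 1)) \<le> n"
proof -
  have "(\<Sum>i=1..q-1. (l i - 1) * a) = a * ((\<Sum>i=1..q-1. l i) - (q - 1))"
    using sum_pred_mult[of "{1..q-1}" l a] assms(3) by simp
  then show ?thesis
    using cell_lower_corner_sum_le lower_corner_in_cell[OF assms] by fastforce
qed

lemma le_divide_add_iff_mult_diff_le: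
  fixes a m n L :: nat
  assumes "0 < a" and "m \<le> L"
  shows "real L \<le> real n / real a + real m \<longleftrightarrow> a * (L - m) \<le> n"
proof -
  have "real L \<le> real n / real a + real m \<longleftrightarrow> real (L - m) \<le> real n / real a"
    using assms(2) by (simp add: of_nat_diff algebra_simps)
  also have "\<dots> \<longleftrightarrow> real (a * (L - m)) \<le> real n"
    using assms(1) by (simp add: le_divide_eq mult.commute)
  finally show ?thesis by (simp only: of_nat_le_iff)
qed

theorem lemma12:
  fixes n q a :: nat and l :: "nat \<Rightarrow> nat"
  assumes "n \<ge> 2" and "q \<ge> 2" and "1 \<le> a" and "a \<le> n"
    and "\<forall>i\<in>{1..q-1}. 1 \<le> l i \<and> l i \<le> nat \<lceil>real (n + 1) / real a\<rceil>"
  shows "cell q n a l \<noteq> {} \<longleftrightarrow>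
    (real (q - 1) \<le> real (\<Sum>i=1..q-1. l i) \<and>
     real (\<Sum>i=1..q-1. l i) \<le> real n / real a + real (q - 1))"
proof -
  have l_pos: "\<forall>i\<in>{1..q-1}. 1 \<le> l i"
    using assms(5) by blast
  then have q_le: "q - 1 \<le> (\<Sum>i=1..q-1. l i)"
    using sum_bounded_below[of "{1..q-1}" 1 l] by simp
  have "cell q n a l \<noteq> {} \<longleftrightarrow> a * ((\<Sum>i=1..q-1. l i) - (q - 1)) \<le> n"
    using assms(2,3) l_pos by (intro cell_nonempty_iff) auto
  also have "\<dots> \<longleftrightarrow> real (\<Sum>i=1..q-1. l i) \<le> real n / real a + real (q - 1)"
    using assms(3) q_le by (intro le_divide_add_iff_mult_diff_le[symmetric]) auto
  finally show ?thesis
    using q_le by (simp only: of_nat_le_iff simp_thms)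
qed

end
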